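(* Let $W$ be a string C-group, $\mathcal{P}(W)$ the regular abstract polytope with automorphism group $W$, and $N\le W$ a subgroup such that $\mathcal{P}(W)/N$ is a polytope on which $W$ acts via the flag action. Let $\mathrm{Core}(W,N)=\bigcap_{w\in W}N^{w}$. Suppose that $\mathcal{P}(W/\mathrm{Core}(W,N))$ is a well-defined regular polytope. Let $\mathcal{R}$ be any other regular cover of $\mathcal{P}(W)/N$ whose automorphism group acts on $\mathcal{P}(W)/N$ via the flag action, and on which $W$ acts likewise (so that $\mathcal{R}=\mathcal{P}(W)/K=\mathcal{P}(W/K)$ for a normal subgroup $K$ of $W$). Then $\mathcal{R}$ also covers $\mathcal{P}(W/\mathrm{Core}(W,N))$.
   Context: An abstract polytope is a graded poset with least and greatest faces, all flags (maximal chains) of the same length, strongly connected, and satisfying the diamond condition. A string C-group is a group generated by distinct involutions $s_0,\dots,s_{n-1}$ with $(s_is_j)^2=1$ for $|i-j|>1$ and satisfying the intersection property $\langle s_i:i\in I\rangle\cap\langle s_j:j\in J\rangle=\langle s_i:i\in I\cap J\rangle$; regular polytopes correspond bijectively to string C-groups, $\mathcal{P}(W)$ denoting the regular polytope with automorphism group $W$. For a polytope $\mathcal{Q}$, the flag action of $W$ sends a flag $\Phi$ under $s_i$ to the unique flag $\Phi^{s_i}$ differing from $\Phi$ only in its face of rank $i$, when this extends to a well-defined action of $W$ on the flags. For $N\le W$, $\mathcal{P}(W)/N$ denotes the quotient of $\mathcal{P}(W)$ by $N$; a polytope on which $W$ acts by the flag action is isomorphic to $\mathcal{P}(W)/N$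 where $N$ is the stabilizer of a base flag. $N^w=w^{-1}Nw$. *)

theory Defs
  imports "HOL-Algebra.Generated_Groups"
begin

definition partial_order_on_set :: "'a set \<Rightarrow> ('a \<Rightarrow> 'a \<Rightarrow> bool) \<Rightarrow> bool" where
  "partial_order_on_set F lq \<longleftrightarrow>
     (\<forall>x\<in>F. lq x x) \<and>
     (\<forall>x\<in>F. \<forall>y\<in>F. lq x y \<and> lq y x \<longrightarrow> x = y) \<and>
     (\<forall>x\<in>F. \<forall>y\<in>F. \<forall>z\<in>F. lq x y \<and> lq y z \<longrightarrow> lq x z)"

definition is_flag :: "'a set \<Rightarrow> ('a \<Rightarrow> 'a \<Rightarrow> bool) \<Rightarrow> 'a set \<Rightarrow> bool" where
  "is_flag F lq \<Phi> \<longleftrightarrow>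
     \<Phi> \<subseteq> F \<and>
     (\<forall>x\<in>\<Phi>. \<forall>y\<in>\<Phi>. lq x y \<or> lq y x) \<and>
     (\<forall>x\<in>F. (\<forall>y\<in>\<Phi>. lq x y \<or> lq y x) \<longrightarrow> x \<in> \<Phi>)"

definition proper_in_section ::
  "'a set \<Rightarrow> ('a \<Rightarrow> 'a \<Rightarrow> bool) \<Rightarrow> 'a \<Rightarrow> 'a \<Rightarrow> 'a \<Rightarrow> bool" where
  "proper_in_section F lq x y u \<longleftrightarrow> u \<in> F \<and> lq x u \<and> lq u y \<and> u \<noteq> x \<and> u \<noteq> y"

definition section_connected ::
  "'a set \<Rightarrow> ('a \<Rightarrow> 'a \<Rightarrow> bool) \<Rightarrow> ('a \<Rightarrow> int) \<Rightarrow> 'a \<Rightarrow> 'a \<Rightarrow> bool" where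
  "section_connected F lq rk x y \<longleftrightarrow>
     rk y - rk x - 1 \<le> 1 \<or>
     (\<forall>u v. proper_in_section F lq x y u \<and> proper_in_section F lq x y v \<longrightarrow>
        (\<exists>ps. ps \<noteq> [] \<and> hd ps = u \<and> last ps = v \<and>
              (\<forall>p\<in>set ps. proper_in_section F lq x y p) \<and>
              (\<forall>k. Suc k < length ps \<longrightarrow>
                    lq (ps ! k) (ps ! Suc k) \<or> lq (ps ! Suc k) (ps ! k))))"

definition polytope :: "'a set \<Rightarrow> ('a \<Rightarrow> 'a \<Rightarrow> bool) \<Rightarrow> ('a \<Rightarrow> int) \<Rightarrow> nat \<Rightarrow> bool" where
  "polytope F lq rk n \<longleftrightarrow>
     partial_order_on_set F lq \<and>
     (\<exists>b\<in>F. \<forall>x\<in>F. lq b x) \<and>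
     (\<exists>t\<in>F. \<forall>x\<in>F. lq x t) \<and>
     (\<forall>x\<in>F. -1 \<le> rk x \<and> rk x \<le> int n) \<and>
     (\<forall>x\<in>F. \<forall>y\<in>F. lq x y \<and> x \<noteq> y \<longrightarrow> rk x < rk y) \<and>
     (\<forall>\<Phi>. is_flag F lq \<Phi> \<longrightarrow> (\<forall>i. -1 \<le> i \<and> i \<le> int n \<longrightarrow> (\<exists>!x. x \<in> \<Phi> \<and> rk x = i))) \<and>
     (\<forall>x\<in>F. \<forall>y\<in>F. lq x y \<and> rk y = rk x + 2 \<longrightarrow>
        card {z\<in>F. lq x z \<and> lq z y \<and> z \<noteq> x \<and> z \<noteq> y} = 2) \<and>
     (\<forall>x\<in>F. \<forall>y\<in>F. lq x y \<longrightarrow> section_connected F lq rk x y)"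

definition i_adjacent ::
  "'a set \<Rightarrow> ('a \<Rightarrow> 'a \<Rightarrow> bool) \<Rightarrow> ('a \<Rightarrow> int) \<Rightarrow> nat \<Rightarrow> 'a set \<Rightarrow> 'a set \<Rightarrow> bool" where
  "i_adjacent F lq rk i \<Phi> \<Psi> \<longleftrightarrow>
     is_flag F lq \<Phi> \<and> is_flag F lq \<Psi> \<and> \<Phi> \<noteq> \<Psi> \<and>
     (\<forall>x\<in>\<Phi>. rk x \<noteq> int i \<longrightarrow> x \<in> \<Psi>)"

definition polytope_automorphism ::
  "'a set \<Rightarrow> ('a \<Rightarrow> 'a \<Rightarrow> bool) \<Rightarrow> ('a \<Rightarrow> 'a) \<Rightarrow> bool" where
  "polytope_automorphism F lq \<alpha> \<longleftrightarrow>
     bij_betw \<alpha> F F \<and> (\<forall>x\<in>F. \<forall>y\<in>F. lq x y \<longleftrightarrow> lq (\<alpha> x) (\<alpha> y))"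

definition regular_polytope :: "'a set \<Rightarrow> ('a \<Rightarrow> 'a \<Rightarrow> bool) \<Rightarrow> ('a \<Rightarrow> int) \<Rightarrow> nat \<Rightarrow> bool" where
  "regular_polytope F lq rk n \<longleftrightarrow>
     polytope F lq rk n \<and>
     (\<forall>\<Phi> \<Psi>. is_flag F lq \<Phi> \<and> is_flag F lq \<Psi> \<longrightarrow>
        (\<exists>\<alpha>. polytope_automorphism F lq \<alpha> \<and> \<alpha> ` \<Phi> = \<Psi>))"

definition covering ::
  "'a set \<Rightarrow> ('a \<Rightarrow> 'a \<Rightarrow> bool) \<Rightarrow> ('a \<Rightarrow> int) \<Rightarrow>
   'b set \<Rightarrow> ('b \<Rightarrow> 'b \<Rightarrow> bool) \<Rightarrow> ('b \<Rightarrow> int) \<Rightarrow> nat \<Rightarrow> ('a \<Rightarrow> 'b) \<Rightarrow> bool" where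
  "covering F lq rk F' lq' rk' n \<gamma> \<longleftrightarrow>
     \<gamma> ` F = F' \<and>
     (\<forall>x\<in>F. rk' (\<gamma> x) = rk x) \<and>
     (\<forall>x\<in>F. \<forall>y\<in>F. lq x y \<longrightarrow> lq' (\<gamma> x) (\<gamma> y)) \<and>
     (\<forall>\<Phi>. is_flag F lq \<Phi> \<longrightarrow> is_flag F' lq' (\<gamma> ` \<Phi>)) \<and>
     (\<forall>i<n. \<forall>\<Phi> \<Psi>. i_adjacent F lq rk i \<Phi> \<Psi> \<longrightarrow>
        i_adjacent F' lq' rk' i (\<gamma> ` \<Phi>) (\<gamma> ` \<Psi>))"

definition covers ::
  "'a set \<Rightarrow> ('a \<Rightarrow> 'a \<Rightarrow> bool) \<Rightarrow> ('a \<Rightarrow> int) \<Rightarrow>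
   'b set \<Rightarrow> ('b \<Rightarrow> 'b \<Rightarrow> bool) \<Rightarrow> ('b \<Rightarrow> int) \<Rightarrow> nat \<Rightarrow> bool" where
  "covers F lq rk F' lq' rk' n \<longleftrightarrow> (\<exists>\<gamma>. covering F lq rk F' lq' rk' n \<gamma>)"

definition string_C_group :: "('g, 'm) monoid_scheme \<Rightarrow> (nat \<Rightarrow> 'g) \<Rightarrow> nat \<Rightarrow> bool" where
  "string_C_group G s n \<longleftrightarrow>
     group G \<and>
     (\<forall>i<n. s i \<in> carrier G \<and> s i \<noteq> \<one>\<^bsub>G\<^esub> \<and> s i \<otimes>\<^bsub>G\<^esub> s i = \<one>\<^bsub>G\<^esub>) \<and>
     inj_on s {..<n} \<and>
     generate G (s ` {..<n}) = carrier G \<and>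
     (\<forall>i<n. \<forall>j<n. (i + 1 < j \<or> j + 1 < i) \<longrightarrow>
        (s i \<otimes>\<^bsub>G\<^esub> s j) \<otimes>\<^bsub>G\<^esub> (s i \<otimes>\<^bsub>G\<^esub> s j) = \<one>\<^bsub>G\<^esub>) \<and>
     (\<forall>I J. I \<subseteq> {..<n} \<and> J \<subseteq> {..<n} \<longrightarrow>
        generate G (s ` I) \<inter> generate G (s ` J) = generate G (s ` (I \<inter> J)))"

text \<open>W acts (on the right) on the flags of the polytope via the flag action:
  the generator s i sends a flag to its i-adjacent flag.\<close>
definition flag_action ::
  "('g, 'm) monoid_scheme \<Rightarrow> (nat \<Rightarrow> 'g) \<Rightarrow> nat \<Rightarrow>
   'a set \<Rightarrow> ('a \<Rightarrow> 'a \<Rightarrow> bool) \<Rightarrow> ('a \<Rightarrow> int) \<Rightarrow> ('g \<Rightarrow> 'a set \<Rightarrow> 'a set) \<Rightarrow> bool" where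
  "flag_action G s n F lq rk act \<longleftrightarrow>
     (\<forall>g\<in>carrier G. \<forall>\<Phi>. is_flag F lq \<Phi> \<longrightarrow> is_flag F lq (act g \<Phi>)) \<and>
     (\<forall>\<Phi>. is_flag F lq \<Phi> \<longrightarrow> act \<one>\<^bsub>G\<^esub> \<Phi> = \<Phi>) \<and>
     (\<forall>g\<in>carrier G. \<forall>h\<in>carrier G. \<forall>\<Phi>. is_flag F lq \<Phi> \<longrightarrow>
        act (g \<otimes>\<^bsub>G\<^esub> h) \<Phi> = act h (act g \<Phi>)) \<and>
     (\<forall>i<n. \<forall>\<Phi>. is_flag F lq \<Phi> \<longrightarrow> i_adjacent F lq rk i \<Phi> (act (s i) \<Phi>))"

definition flag_stabilizer ::
  "('g, 'm) monoid_scheme \<Rightarrow> ('g \<Rightarrow> 'a set \<Rightarrow> 'a set) \<Rightarrow> 'a set \<Rightarrow> 'g set" where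
  "flag_stabilizer G act \<Phi> = {g \<in> carrier G. act g \<Phi> = \<Phi>}"

definition core :: "('g, 'm) monoid_scheme \<Rightarrow> 'g set \<Rightarrow> 'g set" where
  "core G N = (\<Inter>w\<in>carrier G. {inv\<^bsub>G\<^esub> w \<otimes>\<^bsub>G\<^esub> x \<otimes>\<^bsub>G\<^esub> w | x. x \<in> N})"

end

theory Submission
  imports Defs
begin

text \<open>Each generator s i sends a flag to its unique i-adjacent flag (diamond condition), so every
  map of flags preserving i-adjacency, such as a covering or an automorphism, commutes with the
  flag action of W. Let K be the stabilizer of a base flag of R. Since R is regular, K fixes every
  flag of R, hence through the covering every flag of P(W)/N; so K lies in every conjugate of N,
  i.e. in Core(W,N), the stabilizer of the base flag of P(W/Core(W,N)). Therefore the orbit map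
  g.\<Psi>0 to g.\<Phi>C is a well defined equivariant map of flags. It induces a covering on faces
  because, by strong flag-connectivity, any two flags through a face x are joined by adjacencies
  of ranks other than the rank of x, which keep the image of x fixed.\<close>

section \<open>Faces and flags of an abstract polytope\<close>

locale abstract_polytope =
  fixes F :: "'a set" and lq :: "'a \<Rightarrow> 'a \<Rightarrow> bool" and rk :: "'a \<Rightarrow> int" and n :: nat
  assumes polytope: "polytope F lq rk n"
begin

lemma partial_order: "partial_order_on_set F lq"
  using polytope unfolding polytope_def by (elim conjE)

lemma le_refl: "x \<in> F \<Longrightarrow> lq x x"
  using partial_order unfolding partial_order_on_set_def by blast

lemma le_trans: "x \<in> F \<Longrightarrow> y \<in> F \<Longrightarrow> z \<in> F \<Longrightarrow> lq x y \<Longrightarrow> lq y z \<Longrightarrow> lq x z"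
  using partial_order unfolding partial_order_on_set_def by blast

lemma least_face: "\<exists>b\<in>F. \<forall>x\<in>F. lq b x"
  using polytope unfolding polytope_def by (elim conjE) blast

lemma greatest_face: "\<exists>t\<in>F. \<forall>x\<in>F. lq x t"
  using polytope unfolding polytope_def by (elim conjE) blast

lemma rank_range: "x \<in> F \<Longrightarrow> -1 \<le> rk x \<and> rk x \<le> int n"
  using polytope unfolding polytope_def by (elim conjE) blast

lemma rank_less: "x \<in> F \<Longrightarrow> y \<in> F \<Longrightarrow> lq x y \<Longrightarrow> x \<noteq> y \<Longrightarrow> rk x < rk y"
  using polytope unfolding polytope_def by (elim conjE) blast

lemma rank_le: "x \<in> F \<Longrightarrow> y \<in> F \<Longrightarrow> lq x y \<Longrightarrow> rk x \<le> rk y"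
  using rank_less by fastforce

lemma flag_unique_face_of_rank:
  "is_flag F lq \<Phi> \<Longrightarrow> -1 \<le> i \<Longrightarrow> i \<le> int n \<Longrightarrow> \<exists>!x. x \<in> \<Phi> \<and> rk x = i"
  using polytope unfolding polytope_def by (elim conjE) blast

lemma diamond:
  "x \<in> F \<Longrightarrow> y \<in> F \<Longrightarrow> lq x y \<Longrightarrow> rk y = rk x + 2 \<Longrightarrow>
     card {z\<in>F. lq x z \<and> lq z y \<and> z \<noteq> x \<and> z \<noteq> y} = 2"
  using polytope unfolding polytope_def by (elim conjE) blast

lemma section_connected: "x \<in> F \<Longrightarrow> y \<in> F \<Longrightarrow> lq x y \<Longrightarrow> section_connected F lq rk x y"
  using polytope unfolding polytope_def by (elim conjE) blast

lemma flag_subset: "is_flag F lq \<Phi> \<Longrightarrow> \<Phi> \<subseteq> F"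
  unfolding is_flag_def by blast

lemma flag_comparable: "is_flag F lq \<Phi> \<Longrightarrow> x \<in> \<Phi> \<Longrightarrow> y \<in> \<Phi> \<Longrightarrow> lq x y \<or> lq y x"
  unfolding is_flag_def by blast

lemma flag_maximal: "is_flag F lq \<Phi> \<Longrightarrow> x \<in> F \<Longrightarrow> \<forall>y\<in>\<Phi>. lq x y \<or> lq y x \<Longrightarrow> x \<in> \<Phi>"
  unfolding is_flag_def by blast

lemma flag_rank_inj:
  assumes "is_flag F lq \<Phi>" "x \<in> \<Phi>" "y \<in> \<Phi>" "rk x = rk y"
  shows "x = y"
  using flag_comparable[OF assms(1-3)] flag_subset[OF assms(1)] assms(2-4) rank_less by fastforce

lemma flag_le_of_rank_le:
  assumes "is_flag F lq \<Phi>" "x \<in> \<Phi>" "y \<in> \<Phi>" "rk x \<le> rk y"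
  shows "lq x y"
proof (cases "x = y")
  case True
  then show ?thesis using le_refl flag_subset[OF assms(1)] assms(3) by blast
next
  case False
  then show ?thesis
    using flag_comparable[OF assms(1-3)] flag_subset[OF assms(1)] assms(2-4) rank_less[of y x] by fastforce
qed

lemma flag_subset_eq:
  assumes "is_flag F lq \<Phi>" "is_flag F lq \<Psi>" "\<Phi> \<subseteq> \<Psi>"
  shows "\<Phi> = \<Psi>"
proof -
  have "y \<in> \<Phi>" if "y \<in> \<Psi>" for y
    using flag_maximal[OF assms(1)] flag_subset[OF assms(2)] flag_comparable[OF assms(2) that] assms(3) that
    by blast
  then show ?thesis using assms(3) by blast
qed

lemma chain_extends_to_flag:
  assumes "C \<subseteq> F" "\<forall>x\<in>C. \<forall>y\<in>C. lq x y \<or> lq y x"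
  obtains \<Phi> where "is_flag F lq \<Phi>" "C \<subseteq> \<Phi>"
proof -
  define A where "A = {D. C \<subseteq> D \<and> D \<subseteq> F \<and> (\<forall>x\<in>D. \<forall>y\<in>D. lq x y \<or> lq y x)}"
  have "\<exists>U\<in>A. \<forall>X\<in>Ch. X \<subseteq> U" if ch: "Ch \<in> chains A" for Ch
  proof (cases "Ch = {}")
    case True
    then show ?thesis using assms unfolding A_def by blast
  next
    case False
    have sub: "Ch \<subseteq> A" and lin: "\<And>X Y. X \<in> Ch \<Longrightarrow> Y \<in> Ch \<Longrightarrow> X \<subseteq> Y \<or> Y \<subseteq> X"
      using ch unfolding chains_def chain_subset_def by auto
    have "\<forall>x\<in>\<Union>Ch. \<forall>y\<in>\<Union>Ch. lq x y \<or> lq y x"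
    proof (intro ballI)
      fix x y assume "x \<in> \<Union>Ch" "y \<in> \<Union>Ch"
      then obtain X Y where "X \<in> Ch" "Y \<in> Ch" "x \<in> X" "y \<in> Y" by blast
      then show "lq x y \<or> lq y x" using lin[of X Y] sub unfolding A_def by blast
    qed
    then have "\<Union>Ch \<in> A" using False sub unfolding A_def by blast
    then show ?thesis by blast
  qed
  then obtain M where M: "M \<in> A" "\<forall>X\<in>A. M \<subseteq> X \<longrightarrow> X = M"
    using Zorn_Lemma2[of A] by blast
  have "is_flag F lq M"
    unfolding is_flag_def
  proof (intro conjI ballI impI)
    fix x assume x: "x \<in> F" "\<forall>y\<in>M. lq x y \<or> lq y x"
    have "insert x M \<in> A" using M(1) x le_refl unfolding A_def by auto
    then show "x \<in> M" using M(2) by blast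
  qed (use M(1) A_def in auto)
  then show ?thesis using that M(1) unfolding A_def by blast
qed

lemma flag_exists: obtains \<Phi> where "is_flag F lq \<Phi>"
  using chain_extends_to_flag[of "{}"] by auto

lemma face_in_flag:
  assumes "x \<in> F" obtains \<Phi> where "is_flag F lq \<Phi>" "x \<in> \<Phi>"
  using chain_extends_to_flag[of "{x}"] assms le_refl by auto

lemma incident_faces_in_flag:
  assumes "x \<in> F" "y \<in> F" "lq x y"
  obtains \<Phi> where "is_flag F lq \<Phi>" "x \<in> \<Phi>" "y \<in> \<Phi>"
  using chain_extends_to_flag[of "{x, y}"] assms le_refl by auto

definition flag_face :: "'a set \<Rightarrow> int \<Rightarrow> 'a" where
  "flag_face \<Phi> i = (THE x. x \<in> \<Phi> \<and> rk x = i)"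

lemma flag_face:
  assumes "is_flag F lq \<Phi>" "-1 \<le> i" "i \<le> int n"
  shows "flag_face \<Phi> i \<in> \<Phi>" "rk (flag_face \<Phi> i) = i"
  using theI'[OF flag_unique_face_of_rank[OF assms]] unfolding flag_face_def by auto

lemma flag_face_rank:
  assumes "is_flag F lq \<Phi>" "x \<in> \<Phi>"
  shows "flag_face \<Phi> (rk x) = x"
  using flag_face[OF assms(1)] flag_rank_inj[OF assms(1) _ assms(2)] rank_range flag_subset[OF assms(1)] assms(2)
  by (metis subsetD)

lemma least_face_in_flags: obtains b where "b \<in> F" "rk b = -1" "\<And>\<Phi>. is_flag F lq \<Phi> \<Longrightarrow> b \<in> \<Phi>"
proof -
  obtain b where b: "b \<in> F" "\<forall>x\<in>F. lq b x" using least_face by blast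
  have in_flags: "b \<in> \<Phi>" if "is_flag F lq \<Phi>" for \<Phi>
    using flag_maximal[OF that b(1)] b(2) flag_subset[OF that] by blast
  obtain \<Phi> where \<Phi>: "is_flag F lq \<Phi>" using flag_exists by blast
  have "flag_face \<Phi> (-1) \<in> F" using flag_face(1)[OF \<Phi>] flag_subset[OF \<Phi>] by auto
  then have "rk b \<le> rk (flag_face \<Phi> (-1))" using rank_le[OF b(1)] b(2) by blast
  then have "rk b = -1" using flag_face(2)[OF \<Phi>] rank_range[OF b(1)] by simp
  then show ?thesis using that b(1) in_flags by blast
qed

lemma greatest_face_in_flags: obtains t where "t \<in> F" "rk t = int n" "\<And>\<Phi>. is_flag F lq \<Phi> \<Longrightarrow> t \<in> \<Phi>"
proof -
  obtain t where t: "t \<in> F" "\<forall>x\<in>F. lq x t" using greatest_face by blast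
  have in_flags: "t \<in> \<Phi>" if "is_flag F lq \<Phi>" for \<Phi>
    using flag_maximal[OF that t(1)] t(2) flag_subset[OF that] by blast
  obtain \<Phi> where \<Phi>: "is_flag F lq \<Phi>" using flag_exists by blast
  have "flag_face \<Phi> (int n) \<in> F" using flag_face(1)[OF \<Phi>] flag_subset[OF \<Phi>] by auto
  then have "rk (flag_face \<Phi> (int n)) \<le> rk t" using rank_le[OF _ t(1)] t(2) by blast
  then have "rk t = int n" using flag_face(2)[OF \<Phi>] rank_range[OF t(1)] by simp
  then show ?thesis using that t(1) in_flags by blast
qed

lemma i_adjacent_flags:
  "i_adjacent F lq rk i \<Phi> \<Psi> \<Longrightarrow> is_flag F lq \<Phi> \<and> is_flag F lq \<Psi> \<and> \<Phi> \<noteq> \<Psi>"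
  unfolding i_adjacent_def by blast

lemma flag_ranked_subset_converse:
  assumes "is_flag F lq \<Phi>" "is_flag F lq \<Psi>" "\<forall>x\<in>\<Phi>. P (rk x) \<longrightarrow> x \<in> \<Psi>" "x \<in> \<Psi>" "P (rk x)"
  shows "x \<in> \<Phi>"
proof -
  have r: "-1 \<le> rk x" "rk x \<le> int n" using rank_range flag_subset[OF assms(2)] assms(4) by auto
  have "flag_face \<Phi> (rk x) \<in> \<Psi>" using flag_face[OF assms(1) r] assms(3,5) by auto
  then show ?thesis
    using flag_rank_inj[OF assms(2) _ assms(4)] flag_face[OF assms(1) r] by metis
qed

lemma i_adjacent_sym: "i_adjacent F lq rk i \<Phi> \<Psi> \<Longrightarrow> i_adjacent F lq rk i \<Psi> \<Phi>"
  using flag_ranked_subset_converse[of \<Phi> \<Psi> "\<lambda>r. r \<noteq> int i"] unfolding i_adjacent_def by blast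

lemma i_adjacent_face_in_diamond:
  assumes adj: "i_adjacent F lq rk i \<Phi> \<Psi>" and i: "i < n"
  defines "lo \<equiv> flag_face \<Phi> (int i - 1)" and "hi \<equiv> flag_face \<Phi> (int i + 1)"
  shows "flag_face \<Psi> (int i) \<in> {z\<in>F. lq lo z \<and> lq z hi \<and> z \<noteq> lo \<and> z \<noteq> hi}"
    and "flag_face \<Psi> (int i) \<noteq> flag_face \<Phi> (int i)"
proof -
  have fl: "is_flag F lq \<Phi>" "is_flag F lq \<Psi>" "\<Phi> \<noteq> \<Psi>" using i_adjacent_flags[OF adj] by auto
  have lo: "lo \<in> \<Phi>" "rk lo = int i - 1" and hi: "hi \<in> \<Phi>" "rk hi = int i + 1"
    using flag_face[OF fl(1)] i unfolding lo_def hi_def by auto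
  have z: "flag_face \<Psi> (int i) \<in> \<Psi>" "rk (flag_face \<Psi> (int i)) = int i"
    using flag_face[OF fl(2)] i by auto
  have "lo \<in> \<Psi>" "hi \<in> \<Psi>" using lo hi adj unfolding i_adjacent_def by auto
  then show "flag_face \<Psi> (int i) \<in> {z\<in>F. lq lo z \<and> lq z hi \<and> z \<noteq> lo \<and> z \<noteq> hi}"
    using z lo(2) hi(2) flag_le_of_rank_le[OF fl(2)] flag_subset[OF fl(2)] by auto
  show "flag_face \<Psi> (int i) \<noteq> flag_face \<Phi> (int i)"
  proof
    assume eq: "flag_face \<Psi> (int i) = flag_face \<Phi> (int i)"
    have "x \<in> \<Psi>" if x: "x \<in> \<Phi>" for x
    proof (cases "rk x = int i")
      case True
      then show ?thesis using flag_face_rank[OF fl(1) x] eq z by metis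
    qed (use adj x in \<open>auto simp: i_adjacent_def\<close>)
    then show False using flag_subset_eq fl by blast
  qed
qed

lemma i_adjacent_unique:
  assumes adj1: "i_adjacent F lq rk i \<Phi> \<Psi>1" and adj2: "i_adjacent F lq rk i \<Phi> \<Psi>2" and i: "i < n"
  shows "\<Psi>1 = \<Psi>2"
proof -
  have fl: "is_flag F lq \<Phi>" "is_flag F lq \<Psi>1" "is_flag F lq \<Psi>2"
    using i_adjacent_flags[OF adj1] i_adjacent_flags[OF adj2] by auto
  define lo where "lo = flag_face \<Phi> (int i - 1)"
  define hi where "hi = flag_face \<Phi> (int i + 1)"
  define z where "z = flag_face \<Phi> (int i)"
  let ?S = "{z\<in>F. lq lo z \<and> lq z hi \<and> z \<noteq> lo \<and> z \<noteq> hi}"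
  have lo: "lo \<in> \<Phi>" "rk lo = int i - 1" and hi: "hi \<in> \<Phi>" "rk hi = int i + 1"
    and z: "z \<in> \<Phi>" "rk z = int i"
    using flag_face[OF fl(1)] i unfolding lo_def hi_def z_def by auto
  have card_S: "card ?S = 2"
    by (rule diamond) (use flag_le_of_rank_le[OF fl(1) lo(1) hi(1)] flag_subset[OF fl(1)] lo hi in auto)
  have "z \<in> ?S"
    using flag_le_of_rank_le[OF fl(1)] flag_subset[OF fl(1)] lo hi z by auto
  moreover note diamond1 = i_adjacent_face_in_diamond[OF adj1 i, folded lo_def hi_def z_def]
    and diamond2 = i_adjacent_face_in_diamond[OF adj2 i, folded lo_def hi_def z_def]
  ultimately have three: "{z, flag_face \<Psi>1 (int i), flag_face \<Psi>2 (int i)} \<subseteq> ?S" by blast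
  have same_face: "flag_face \<Psi>1 (int i) = flag_face \<Psi>2 (int i)"
  proof (rule ccontr)
    assume "flag_face \<Psi>1 (int i) \<noteq> flag_face \<Psi>2 (int i)"
    then have "card {z, flag_face \<Psi>1 (int i), flag_face \<Psi>2 (int i)} = 3"
      using diamond1(2) diamond2(2) by (simp add: eq_commute)
    moreover have "finite ?S" using card_S by (metis card.infinite zero_neq_numeral)
    ultimately show False using card_mono[OF _ three] card_S by linarith
  qed
  have "x \<in> \<Psi>2" if x: "x \<in> \<Psi>1" for x
  proof (cases "rk x = int i")
    case True
    then show ?thesis using flag_face_rank[OF fl(2) x] same_face flag_face(1)[OF fl(3)] i by force
  next
    case False
    then show ?thesis using i_adjacent_sym[OF adj1] adj2 x unfolding i_adjacent_def by blast
  qed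
  then show ?thesis using flag_subset_eq fl by blast
qed

end

section \<open>Strong flag-connectivity\<close>

definition ranks_between :: "int \<Rightarrow> int \<Rightarrow> nat set" where
  "ranks_between lo hi = {j. lo < int j \<and> int j < hi}"

context abstract_polytope
begin

definition agree_outside :: "int \<Rightarrow> int \<Rightarrow> 'a set \<Rightarrow> 'a set \<Rightarrow> bool" where
  "agree_outside lo hi \<Phi> \<Psi> \<longleftrightarrow> (\<forall>x. rk x \<le> lo \<or> hi \<le> rk x \<longrightarrow> (x \<in> \<Phi> \<longleftrightarrow> x \<in> \<Psi>))"

definition adj_connected :: "nat set \<Rightarrow> 'a set \<Rightarrow> 'a set \<Rightarrow> bool" where
  "adj_connected J = (\<lambda>\<Phi> \<Psi>. \<exists>j\<in>J. i_adjacent F lq rk j \<Phi> \<Psi>)\<^sup>*\<^sup>*"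

lemma agree_outsideI:
  assumes "is_flag F lq \<Phi>" "is_flag F lq \<Psi>" "\<forall>x\<in>\<Phi>. rk x \<le> lo \<or> hi \<le> rk x \<longrightarrow> x \<in> \<Psi>"
  shows "agree_outside lo hi \<Phi> \<Psi>"
  using assms(3) flag_ranked_subset_converse[OF assms] unfolding agree_outside_def by blast

lemma agree_outside_refl: "agree_outside lo hi \<Phi> \<Phi>"
  unfolding agree_outside_def by blast

lemma agree_outside_sym: "agree_outside lo hi \<Phi> \<Psi> \<Longrightarrow> agree_outside lo hi \<Psi> \<Phi>"
  unfolding agree_outside_def by blast

lemma agree_outside_trans:
  "agree_outside lo hi \<Phi> \<Psi> \<Longrightarrow> agree_outside lo hi \<Psi> \<Theta> \<Longrightarrow> agree_outside lo hi \<Phi> \<Theta>"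
  unfolding agree_outside_def by blast

lemma flags_agree_outside_all_ranks:
  assumes "is_flag F lq \<Phi>" "is_flag F lq \<Psi>"
  shows "agree_outside (-1) (int n) \<Phi> \<Psi>"
proof (rule agree_outsideI[OF assms], intro ballI impI)
  fix x assume x: "x \<in> \<Phi>" "rk x \<le> -1 \<or> int n \<le> rk x"
  obtain b where b: "b \<in> F" "rk b = -1" "\<And>\<Phi>. is_flag F lq \<Phi> \<Longrightarrow> b \<in> \<Phi>"
    by (rule least_face_in_flags) auto
  obtain t where t: "t \<in> F" "rk t = int n" "\<And>\<Phi>. is_flag F lq \<Phi> \<Longrightarrow> t \<in> \<Phi>"
    by (rule greatest_face_in_flags) auto
  have "rk x = -1 \<or> rk x = int n" using x rank_range flag_subset[OF assms(1)] by force
  then have "x = b \<or> x = t" using flag_rank_inj[OF assms(1) x(1)] b t assms(1) by metis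
  then show "x \<in> \<Psi>" using b(3) t(3) assms(2) by blast
qed

lemma adj_connected_mono: "adj_connected J \<Phi> \<Psi> \<Longrightarrow> J \<subseteq> J' \<Longrightarrow> adj_connected J' \<Phi> \<Psi>"
  unfolding adj_connected_def by (erule rtranclp_mono[THEN predicate2D, rotated]) blast

lemma adj_connected_trans:
  "adj_connected J \<Phi> \<Psi> \<Longrightarrow> adj_connected J \<Psi> \<Theta> \<Longrightarrow> adj_connected J \<Phi> \<Theta>"
  unfolding adj_connected_def by (rule rtranclp_trans)

lemma flag_splice:
  assumes fl: "is_flag F lq \<Phi>" "is_flag F lq \<Psi>" and p: "p \<in> \<Phi>" "p \<in> \<Psi>"
  shows "is_flag F lq ({y\<in>\<Phi>. rk y \<le> rk p} \<union> {y\<in>\<Psi>. rk p \<le> rk y})"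
  unfolding is_flag_def
proof (intro conjI ballI impI)
  let ?\<Theta> = "{y\<in>\<Phi>. rk y \<le> rk p} \<union> {y\<in>\<Psi>. rk p \<le> rk y}"
  have pF: "p \<in> F" using flag_subset fl p by blast
  show "?\<Theta> \<subseteq> F" using flag_subset fl by blast
  have below_above: "lq x y" if "x \<in> \<Phi>" "rk x \<le> rk p" "y \<in> \<Psi>" "rk p \<le> rk y" for x y
    using le_trans[OF _ pF, of x y] flag_le_of_rank_le[OF fl(1) that(1) p(1) that(2)]
      flag_le_of_rank_le[OF fl(2) p(2) that(3,4)] flag_subset fl that by blast
  show "lq x y \<or> lq y x" if "x \<in> ?\<Theta>" "y \<in> ?\<Theta>" for x y
    using that below_above flag_comparable fl by blast
  fix x assume xF: "x \<in> F" and cmp: "\<forall>y\<in>?\<Theta>. lq x y \<or> lq y x"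
  have "lq x p \<or> lq p x" using cmp p by auto
  then show "x \<in> ?\<Theta>"
  proof
    assume xp: "lq x p"
    have "lq x y \<or> lq y x" if y: "y \<in> \<Phi>" for y
    proof (cases "rk y \<le> rk p")
      case False
      then have "lq p y" using flag_le_of_rank_le[OF fl(1) p(1) y] by simp
      then show ?thesis using le_trans[OF xF pF] y flag_subset fl xp by blast
    qed (use cmp y in blast)
    then show ?thesis using flag_maximal[OF fl(1) xF] rank_le[OF xF pF xp] by blast
  next
    assume px: "lq p x"
    have "lq x y \<or> lq y x" if y: "y \<in> \<Psi>" for y
    proof (cases "rk p \<le> rk y")
      case False
      then have "lq y p" using flag_le_of_rank_le[OF fl(2) y p(2)] by simp
      then show ?thesis using le_trans[OF _ pF xF] y flag_subset fl px by blast
    qed (use cmp y in blast)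
    then show ?thesis using flag_maximal[OF fl(2) xF] rank_le[OF pF xF px] by blast
  qed
qed

lemma flag_splice_agree_outside:
  assumes fl: "is_flag F lq \<Phi>" "is_flag F lq \<Psi>" and p: "p \<in> \<Phi>" "p \<in> \<Psi>"
    and agree: "agree_outside lo hi \<Phi> \<Psi>"
  obtains \<Theta> where "is_flag F lq \<Theta>" "p \<in> \<Theta>"
    "agree_outside lo (rk p) \<Phi> \<Theta>" "agree_outside (rk p) hi \<Theta> \<Psi>"
proof
  let ?\<Theta> = "{y\<in>\<Psi>. rk y \<le> rk p} \<union> {y\<in>\<Phi>. rk p \<le> rk y}"
  show fl\<Theta>: "is_flag F lq ?\<Theta>" by (rule flag_splice[OF fl(2,1) p(2,1)])
  show "p \<in> ?\<Theta>" using p by simp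
  show "agree_outside lo (rk p) \<Phi> ?\<Theta>"
    by (rule agree_outsideI[OF fl(1) fl\<Theta>]) (use agree in \<open>auto simp: agree_outside_def\<close>)
  show "agree_outside (rk p) hi ?\<Theta> \<Psi>"
  proof (rule agree_outsideI[OF fl\<Theta> fl(2)], intro ballI impI)
    fix x assume x: "x \<in> ?\<Theta>" "rk x \<le> rk p \<or> hi \<le> rk x"
    consider "x \<in> \<Psi>" | "x \<in> \<Phi>" "rk x = rk p" | "x \<in> \<Phi>" "hi \<le> rk x"
      using x by fastforce
    then show "x \<in> \<Psi>"
    proof cases
      case 2
      then show ?thesis using flag_rank_inj[OF fl(1) _ p(1)] p(2) by blast
    next
      case 3
      then show ?thesis using agree unfolding agree_outside_def by blast
    qed
  qed
qed

lemma ranks_between_mono: "lo' \<le> lo \<Longrightarrow> hi \<le> hi' \<Longrightarrow> ranks_between lo hi \<subseteq> ranks_between lo' hi'"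
  unfolding ranks_between_def by auto

lemma agree_outside_narrow_connected:
  assumes fl: "is_flag F lq \<Phi>" "is_flag F lq \<Psi>" and agree: "agree_outside lo hi \<Phi> \<Psi>"
    and narrow: "hi - lo \<le> 2" and lo: "-1 \<le> lo"
  shows "adj_connected (ranks_between lo hi) \<Phi> \<Psi>"
proof (cases "\<Phi> = \<Psi>")
  case True
  then show ?thesis unfolding adj_connected_def by simp
next
  case False
  have gap: "hi = lo + 2"
  proof (rule ccontr)
    assume "hi \<noteq> lo + 2"
    then have "\<Phi> \<subseteq> \<Psi>" using narrow agree unfolding agree_outside_def by force
    then show False using flag_subset_eq fl False by blast
  qed
  define j where "j = nat (lo + 1)"
  have j: "int j = lo + 1" using lo j_def by simp
  have "i_adjacent F lq rk j \<Phi> \<Psi>"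
    unfolding i_adjacent_def
  proof (intro conjI ballI impI)
    fix x assume "x \<in> \<Phi>" "rk x \<noteq> int j"
    then show "x \<in> \<Psi>" using agree j gap unfolding agree_outside_def by force
  qed (use fl False in auto)
  moreover have "j \<in> ranks_between lo hi" using j gap unfolding ranks_between_def by simp
  ultimately show ?thesis unfolding adj_connected_def by blast
qed

lemma flag_through_incident_pair:
  assumes fl: "is_flag F lq \<Phi>" and ab: "a \<in> \<Phi>" "b \<in> \<Phi>"
    and p: "proper_in_section F lq a b p" and q: "proper_in_section F lq a b q"
    and pq: "lq p q \<or> lq q p"
  obtains \<Theta> where "is_flag F lq \<Theta>" "p \<in> \<Theta>" "q \<in> \<Theta>" "agree_outside (rk a) (rk b) \<Phi> \<Theta>"
proof -
  define C where "C = {x\<in>\<Phi>. rk x \<le> rk a \<or> rk b \<le> rk x} \<union> {p, q}"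
  have CF: "C \<subseteq> F" using flag_subset fl p q unfolding C_def proper_in_section_def by auto
  have outside_comparable: "lq x y \<or> lq y x"
    if x: "x \<in> \<Phi>" "rk x \<le> rk a \<or> rk b \<le> rk x" and y: "proper_in_section F lq a b y" for x y
  proof -
    have y: "y \<in> F" "lq a y" "lq y b" using y unfolding proper_in_section_def by auto
    have F: "x \<in> F" "a \<in> F" "b \<in> F" using x(1) ab flag_subset fl by auto
    show ?thesis
    proof (cases "rk x \<le> rk a")
      case True
      then have "lq x a" by (rule flag_le_of_rank_le[OF fl x(1) ab(1)])
      then show ?thesis using le_trans[OF F(1,2) y(1)] y by blast
    next
      case False
      then have "lq b x" using x(2) flag_le_of_rank_le[OF fl ab(2) x(1)] by simp
      then show ?thesis using le_trans[OF y(1) F(3,1)] y by blast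
    qed
  qed
  have "lq x y \<or> lq y x" if "x \<in> C" "y \<in> C" for x y
    using that outside_comparable[OF _ _ p] outside_comparable[OF _ _ q] flag_comparable[OF fl]
      pq le_refl CF unfolding C_def by blast
  then obtain \<Theta> where \<Theta>: "is_flag F lq \<Theta>" "C \<subseteq> \<Theta>"
    using chain_extends_to_flag[OF CF] by blast
  moreover have "agree_outside (rk a) (rk b) \<Phi> \<Theta>"
    by (rule agree_outsideI[OF fl \<Theta>(1)]) (use \<Theta>(2) in \<open>auto simp: C_def\<close>)
  ultimately show ?thesis using that unfolding C_def by blast
qed

text \<open>The hypothesis through is the induction hypothesis of the next lemma. The flags are
  linked along a path of proper faces of the section, which exists as the section is connected.\<close>

lemma connected_along_section_path:
  assumes fl: "is_flag F lq \<Phi>" "is_flag F lq \<Psi>" and ab: "a \<in> \<Phi>" "b \<in> \<Phi>"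
    and agree: "agree_outside (rk a) (rk b) \<Phi> \<Psi>" and wide: "rk a + 2 < rk b"
    and through: "\<And>\<Phi>' \<Psi>' p. is_flag F lq \<Phi>' \<Longrightarrow> is_flag F lq \<Psi>' \<Longrightarrow>
      agree_outside (rk a) (rk b) \<Phi> \<Phi>' \<Longrightarrow> agree_outside (rk a) (rk b) \<Phi> \<Psi>' \<Longrightarrow>
      proper_in_section F lq a b p \<Longrightarrow> p \<in> \<Phi>' \<Longrightarrow> p \<in> \<Psi>' \<Longrightarrow> adj_connected J \<Phi>' \<Psi>'"
  shows "adj_connected J \<Phi> \<Psi>"
proof -
  have abF: "a \<in> F" "b \<in> F" using ab flag_subset fl by auto
  have ab\<Psi>: "a \<in> \<Psi>" "b \<in> \<Psi>" using agree ab unfolding agree_outside_def by auto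
  have r: "-1 \<le> rk a + 1" "rk a + 1 \<le> int n" using rank_range abF wide by force+
  have proper_face: "proper_in_section F lq a b (flag_face \<Theta> (rk a + 1))"
    if \<Theta>: "is_flag F lq \<Theta>" "a \<in> \<Theta>" "b \<in> \<Theta>" for \<Theta>
    unfolding proper_in_section_def
    using flag_face[OF \<Theta>(1) r] flag_subset[OF \<Theta>(1)] flag_le_of_rank_le[OF \<Theta>(1)] \<Theta>(2,3) wide
    by auto
  define u where "u = flag_face \<Phi> (rk a + 1)"
  define v where "v = flag_face \<Psi> (rk a + 1)"
  have uv: "u \<in> \<Phi>" "v \<in> \<Psi>"
    using flag_face(1)[OF fl(1) r] flag_face(1)[OF fl(2) r] unfolding u_def v_def by auto
  obtain ps where ps: "ps \<noteq> []" "hd ps = u" "last ps = v"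
    "\<forall>p\<in>set ps. proper_in_section F lq a b p"
    "\<forall>k. Suc k < length ps \<longrightarrow> lq (ps ! k) (ps ! Suc k) \<or> lq (ps ! Suc k) (ps ! k)"
    using section_connected[OF abF flag_le_of_rank_le[OF fl(1) ab]] wide
      proper_face[OF fl(1) ab, folded u_def] proper_face[OF fl(2) ab\<Psi>, folded v_def]
    unfolding section_connected_def by force
  have walk: "adj_connected J \<Phi> \<Theta>" if "j < length ps" "is_flag F lq \<Theta>"
    "agree_outside (rk a) (rk b) \<Phi> \<Theta>" "ps ! j \<in> \<Theta>" for j \<Theta>
    using that
  proof (induction j arbitrary: \<Theta>)
    case 0
    have "ps ! 0 = u" using ps(1,2) hd_conv_nth by metis
    then have "u \<in> \<Theta>" using 0(4) by simp
    then show ?case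
      by (rule through[OF fl(1) 0(2) agree_outside_refl 0(3) proper_face[OF fl(1) ab, folded u_def] uv(1)])
  next
    case (Suc j)
    have pj: "proper_in_section F lq a b (ps ! j)" "proper_in_section F lq a b (ps ! Suc j)"
      using ps(4) Suc.prems(1) by auto
    have "lq (ps ! j) (ps ! Suc j) \<or> lq (ps ! Suc j) (ps ! j)" using ps(5) Suc.prems(1) by blast
    then obtain \<Theta>' where \<Theta>': "is_flag F lq \<Theta>'" "ps ! j \<in> \<Theta>'" "ps ! Suc j \<in> \<Theta>'"
      "agree_outside (rk a) (rk b) \<Phi> \<Theta>'"
      by (rule flag_through_incident_pair[OF fl(1) ab pj])
    have "adj_connected J \<Phi> \<Theta>'" using Suc.IH[OF _ \<Theta>'(1,4,2)] Suc.prems(1) by simp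
    moreover have "adj_connected J \<Theta>' \<Theta>"
      by (rule through[OF \<Theta>'(1) Suc.prems(2) \<Theta>'(4) Suc.prems(3) pj(2) \<Theta>'(3) Suc.prems(4)])
    ultimately show ?case by (rule adj_connected_trans)
  qed
  have "ps ! (length ps - 1) = v" using ps(1,3) last_conv_nth by metis
  then show ?thesis using walk[OF _ fl(2) agree, of "length ps - 1"] ps(1) uv(2) by simp
qed

lemma flags_agreeing_outside_connected:
  assumes "is_flag F lq \<Phi>" "is_flag F lq \<Psi>" "a \<in> \<Phi>" "b \<in> \<Phi>" "agree_outside (rk a) (rk b) \<Phi> \<Psi>"
  shows "adj_connected (ranks_between (rk a) (rk b)) \<Phi> \<Psi>"
  using assms
proof (induction "nat (rk b - rk a)" arbitrary: a b \<Phi> \<Psi> rule: less_induct)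
  case less
  have abF: "a \<in> F" "b \<in> F" using less.prems(1,3,4) flag_subset by auto
  show ?case
  proof (cases "rk b - rk a \<le> 2")
    case True
    then show ?thesis
      using agree_outside_narrow_connected less.prems(1,2,5) rank_range[OF abF(1)] by simp
  next
    case False
    show ?thesis
    proof (rule connected_along_section_path[OF less.prems])
      show "rk a + 2 < rk b" using False by simp
      fix \<Phi>' \<Psi>' p
      assume fl: "is_flag F lq \<Phi>'" "is_flag F lq \<Psi>'"
        and agree: "agree_outside (rk a) (rk b) \<Phi> \<Phi>'" "agree_outside (rk a) (rk b) \<Phi> \<Psi>'"
        and p: "proper_in_section F lq a b p" "p \<in> \<Phi>'" "p \<in> \<Psi>'"
      have "agree_outside (rk a) (rk b) \<Phi>' \<Psi>'"
        using agree agree_outside_sym agree_outside_trans by blast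
      then obtain \<Theta> where \<Theta>: "is_flag F lq \<Theta>" "p \<in> \<Theta>"
        "agree_outside (rk a) (rk p) \<Phi>' \<Theta>" "agree_outside (rk p) (rk b) \<Theta> \<Psi>'"
        by (rule flag_splice_agree_outside[OF fl p(2,3)])
      have ab': "a \<in> \<Phi>'" "b \<in> \<Psi>'" using agree less.prems(3,4) unfolding agree_outside_def by auto
      then have "b \<in> \<Theta>" using \<Theta>(4) unfolding agree_outside_def by auto
      have rp: "rk a < rk p" "rk p < rk b"
        using p(1) abF rank_less unfolding proper_in_section_def by auto
      have "adj_connected (ranks_between (rk a) (rk p)) \<Phi>' \<Theta>"
        using less.hyps[OF _ fl(1) \<Theta>(1) ab'(1) p(2) \<Theta>(3)] rp by simp
      moreover have "adj_connected (ranks_between (rk p) (rk b)) \<Theta> \<Psi>'"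
        using less.hyps[OF _ \<Theta>(1) fl(2) \<Theta>(2) \<open>b \<in> \<Theta>\<close> \<Theta>(4)] rp by simp
      ultimately show "adj_connected (ranks_between (rk a) (rk b)) \<Phi>' \<Psi>'"
        using adj_connected_mono adj_connected_trans ranks_between_mono rp
        by (meson order.strict_implies_order order_refl)
    qed
  qed
qed

lemma flags_through_face_connected:
  assumes fl: "is_flag F lq \<Phi>" "is_flag F lq \<Psi>" and x: "x \<in> \<Phi>" "x \<in> \<Psi>"
  shows "adj_connected {j. j < n \<and> int j \<noteq> rk x} \<Phi> \<Psi>"
proof -
  obtain b where b: "rk b = -1" "\<And>\<Phi>. is_flag F lq \<Phi> \<Longrightarrow> b \<in> \<Phi>"
    by (rule least_face_in_flags) auto
  obtain t where t: "rk t = int n" "\<And>\<Phi>. is_flag F lq \<Phi> \<Longrightarrow> t \<in> \<Phi>"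
    by (rule greatest_face_in_flags) auto
  obtain \<Theta> where \<Theta>: "is_flag F lq \<Theta>" "x \<in> \<Theta>"
    "agree_outside (-1) (rk x) \<Phi> \<Theta>" "agree_outside (rk x) (int n) \<Theta> \<Psi>"
    by (rule flag_splice_agree_outside[OF fl x flags_agree_outside_all_ranks[OF fl]])
  have "adj_connected (ranks_between (rk b) (rk x)) \<Phi> \<Theta>"
    by (rule flags_agreeing_outside_connected[OF fl(1) \<Theta>(1) b(2)[OF fl(1)] x(1)]) (use \<Theta> b in simp)
  moreover have "adj_connected (ranks_between (rk x) (rk t)) \<Theta> \<Psi>"
    by (rule flags_agreeing_outside_connected[OF \<Theta>(1) fl(2) \<Theta>(2) t(2)[OF \<Theta>(1)]]) (use \<Theta> t in simp)
  moreover have "ranks_between (rk b) (rk x) \<subseteq> {j. j < n \<and> int j \<noteq> rk x}"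
    and "ranks_between (rk x) (rk t) \<subseteq> {j. j < n \<and> int j \<noteq> rk x}"
    using b t rank_range flag_subset[OF fl(1)] x(1) unfolding ranks_between_def by force+
  ultimately show ?thesis using adj_connected_mono adj_connected_trans by meson
qed

lemma adj_connected_flag_face:
  assumes "adj_connected J \<Phi> \<Psi>" "\<And>j. j \<in> J \<Longrightarrow> int j \<noteq> r" "-1 \<le> r" "r \<le> int n"
  shows "flag_face \<Psi> r = flag_face \<Phi> r"
  using assms(1) unfolding adj_connected_def
proof (induction rule: rtranclp_induct)
  case (step \<Theta> \<Theta>')
  then obtain j where j: "j \<in> J" "i_adjacent F lq rk j \<Theta> \<Theta>'" by blast
  have fl: "is_flag F lq \<Theta>" "is_flag F lq \<Theta>'" using i_adjacent_flags[OF j(2)] by auto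
  have "flag_face \<Theta> r \<in> \<Theta>'"
    using j flag_face[OF fl(1) assms(3,4)] assms(2) unfolding i_adjacent_def by auto
  then show ?case using flag_face_rank[OF fl(2)] flag_face(2)[OF fl(1) assms(3,4)] step.IH by metis
qed simp

lemma card_faces_below_in_flag:
  assumes fl: "is_flag F lq \<Phi>" and x: "x \<in> \<Phi>"
  shows "card {y\<in>\<Phi>. lq y x \<and> y \<noteq> x} = nat (rk x + 1)"
proof -
  have xF: "x \<in> F" using x flag_subset fl by blast
  have below: "{y\<in>\<Phi>. lq y x \<and> y \<noteq> x} = {y\<in>\<Phi>. rk y < rk x}"
    using rank_less[OF _ xF] flag_subset[OF fl] flag_le_of_rank_le[OF fl _ x] by fastforce
  have "bij_betw rk {y\<in>\<Phi>. rk y < rk x} {-1..<rk x}"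
    unfolding bij_betw_def
  proof
    show "inj_on rk {y\<in>\<Phi>. rk y < rk x}" using flag_rank_inj[OF fl] by (auto intro: inj_onI)
    show "rk ` {y\<in>\<Phi>. rk y < rk x} = {-1..<rk x}"
    proof
      show "rk ` {y\<in>\<Phi>. rk y < rk x} \<subseteq> {-1..<rk x}" using rank_range flag_subset fl by fastforce
      show "{-1..<rk x} \<subseteq> rk ` {y\<in>\<Phi>. rk y < rk x}"
      proof
        fix i assume i: "i \<in> {-1..<rk x}"
        then have r: "-1 \<le> i" "i \<le> int n" using rank_range[OF xF] by auto
        show "i \<in> rk ` {y\<in>\<Phi>. rk y < rk x}"
          using flag_face[OF fl r] i by (intro image_eqI[of _ _ "flag_face \<Phi> i"]) auto
      qed
    qed
  qed
  then have "card {y\<in>\<Phi>. rk y < rk x} = card {-1..<rk x}" by (rule bij_betw_same_card)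
  then show ?thesis using below by simp
qed

lemma automorphism_image_flag:
  assumes \<alpha>: "polytope_automorphism F lq \<alpha>" and fl: "is_flag F lq \<Phi>"
  shows "is_flag F lq (\<alpha> ` \<Phi>)"
proof -
  have bij: "bij_betw \<alpha> F F" and ord: "\<forall>x\<in>F. \<forall>y\<in>F. lq x y \<longleftrightarrow> lq (\<alpha> x) (\<alpha> y)"
    using \<alpha> unfolding polytope_automorphism_def by auto
  have sub: "\<Phi> \<subseteq> F" using flag_subset[OF fl] .
  show ?thesis
    unfolding is_flag_def
  proof (intro conjI ballI impI)
    show "\<alpha> ` \<Phi> \<subseteq> F" using bij sub unfolding bij_betw_def by blast
    show "lq x y \<or> lq y x" if "x \<in> \<alpha> ` \<Phi>" "y \<in> \<alpha> ` \<Phi>" for x y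
      using that ord flag_comparable[OF fl] sub by blast
    fix x assume xF: "x \<in> F" and cmp: "\<forall>y\<in>\<alpha> ` \<Phi>. lq x y \<or> lq y x"
    obtain x' where x': "x' \<in> F" "x = \<alpha> x'" using xF bij unfolding bij_betw_def by blast
    have "\<forall>y\<in>\<Phi>. lq x' y \<or> lq y x'" using cmp x' ord sub by blast
    then show "x \<in> \<alpha> ` \<Phi>" using flag_maximal[OF fl x'(1)] x' by blast
  qed
qed

text \<open>rk x + 1 counts the faces below x in any flag through x.\<close>

lemma automorphism_rank:
  assumes \<alpha>: "polytope_automorphism F lq \<alpha>" and xF: "x \<in> F"
  shows "rk (\<alpha> x) = rk x"
proof -
  have bij: "bij_betw \<alpha> F F" and ord: "\<forall>x\<in>F. \<forall>y\<in>F. lq x y \<longleftrightarrow> lq (\<alpha> x) (\<alpha> y)"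
    using \<alpha> unfolding polytope_automorphism_def by auto
  have inj: "inj_on \<alpha> F" using bij unfolding bij_betw_def by blast
  obtain \<Phi> where fl: "is_flag F lq \<Phi>" "x \<in> \<Phi>" using face_in_flag[OF xF] by blast
  have sub: "\<Phi> \<subseteq> F" using flag_subset[OF fl(1)] .
  have inj_\<Phi>: "inj_on \<alpha> \<Phi>" using inj sub by (rule inj_on_subset)
  have "\<alpha> ` {y\<in>\<Phi>. lq y x \<and> y \<noteq> x} = {y\<in>\<alpha> ` \<Phi>. lq y (\<alpha> x) \<and> y \<noteq> \<alpha> x}"
  proof (intro equalityI subsetI)
    fix z assume "z \<in> \<alpha> ` {y\<in>\<Phi>. lq y x \<and> y \<noteq> x}"
    then obtain y where y: "y \<in> \<Phi>" "lq y x" "y \<noteq> x" "z = \<alpha> y" by blast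
    have "lq (\<alpha> y) (\<alpha> x)" using ord sub y(1,2) fl(2) by blast
    moreover have "\<alpha> y \<noteq> \<alpha> x" using inj_on_eq_iff[OF inj_\<Phi> y(1) fl(2)] y(3) by simp
    ultimately show "z \<in> {y\<in>\<alpha> ` \<Phi>. lq y (\<alpha> x) \<and> y \<noteq> \<alpha> x}" using y(1,4) by simp
  next
    fix z assume "z \<in> {y\<in>\<alpha> ` \<Phi>. lq y (\<alpha> x) \<and> y \<noteq> \<alpha> x}"
    then obtain y where y: "y \<in> \<Phi>" "z = \<alpha> y" "lq (\<alpha> y) (\<alpha> x)" "\<alpha> y \<noteq> \<alpha> x" by blast
    have "lq y x" using ord sub y(1,3) fl(2) by blast
    then show "z \<in> \<alpha> ` {y\<in>\<Phi>. lq y x \<and> y \<noteq> x}" using y by blast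
  qed
  moreover have "card (\<alpha> ` {y\<in>\<Phi>. lq y x \<and> y \<noteq> x}) = card {y\<in>\<Phi>. lq y x \<and> y \<noteq> x}"
    using inj_\<Phi> by (auto intro: card_image inj_on_subset)
  ultimately have "card {y\<in>\<Phi>. lq y x \<and> y \<noteq> x} = card {y\<in>\<alpha> ` \<Phi>. lq y (\<alpha> x) \<and> y \<noteq> \<alpha> x}"
    by simp
  then have "nat (rk x + 1) = nat (rk (\<alpha> x) + 1)"
    using card_faces_below_in_flag[OF fl] card_faces_below_in_flag[OF automorphism_image_flag[OF \<alpha> fl(1)]]
      fl(2) by simp
  moreover have "-1 \<le> rk x" "-1 \<le> rk (\<alpha> x)" using rank_range xF bij unfolding bij_betw_def by auto
  ultimately show ?thesis by simp
qed

lemma automorphism_image_i_adjacent: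
  assumes \<alpha>: "polytope_automorphism F lq \<alpha>" and adj: "i_adjacent F lq rk i \<Phi> \<Psi>"
  shows "i_adjacent F lq rk i (\<alpha> ` \<Phi>) (\<alpha> ` \<Psi>)"
proof -
  have inj: "inj_on \<alpha> F" using \<alpha> unfolding polytope_automorphism_def bij_betw_def by auto
  have fl: "is_flag F lq \<Phi>" "is_flag F lq \<Psi>" "\<Phi> \<noteq> \<Psi>" using i_adjacent_flags[OF adj] by auto
  have sub: "\<Phi> \<subseteq> F" "\<Psi> \<subseteq> F" using flag_subset fl by auto
  have "\<alpha> ` \<Phi> \<noteq> \<alpha> ` \<Psi>" using inj_on_image_eq_iff[OF inj sub] fl(3) by blast
  moreover have "\<alpha> y \<in> \<alpha> ` \<Psi>" if "y \<in> \<Phi>" "rk (\<alpha> y) \<noteq> int i" for y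
    using that adj automorphism_rank[OF \<alpha>] sub unfolding i_adjacent_def by auto
  ultimately show ?thesis
    unfolding i_adjacent_def using automorphism_image_flag[OF \<alpha>] fl by blast
qed

end

section \<open>Flag actions\<close>

locale polytope_flag_action = abstract_polytope F lq rk n for F lq rk n +
  fixes G :: "('g, 'm) monoid_scheme" and s :: "nat \<Rightarrow> 'g" and act :: "'g \<Rightarrow> 'a set \<Rightarrow> 'a set"
  assumes group: "group G"
    and generators_closed: "i < n \<Longrightarrow> s i \<in> carrier G"
    and generated: "generate G (s ` {..<n}) = carrier G"
    and flag_action: "flag_action G s n F lq rk act"

lemma polytope_flag_actionI:
  "polytope F lq rk n \<Longrightarrow> string_C_group G s n \<Longrightarrow> flag_action G s n F lq rk act \<Longrightarrow>
    polytope_flag_action F lq rk n G s act"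
  unfolding polytope_flag_action_def polytope_flag_action_axioms_def abstract_polytope_def
    string_C_group_def by blast

context polytope_flag_action
begin

lemma act_flag: "g \<in> carrier G \<Longrightarrow> is_flag F lq \<Phi> \<Longrightarrow> is_flag F lq (act g \<Phi>)"
  using flag_action unfolding flag_action_def by blast

lemma act_one: "is_flag F lq \<Phi> \<Longrightarrow> act \<one>\<^bsub>G\<^esub> \<Phi> = \<Phi>"
  using flag_action unfolding flag_action_def by blast

lemma act_mult:
  "g \<in> carrier G \<Longrightarrow> h \<in> carrier G \<Longrightarrow> is_flag F lq \<Phi> \<Longrightarrow> act (g \<otimes>\<^bsub>G\<^esub> h) \<Phi> = act h (act g \<Phi>)"
  using flag_action unfolding flag_action_def by blast

lemma act_inv_cancel:
  assumes "g \<in> carrier G" "is_flag F lq \<Phi>"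
  shows "act (inv\<^bsub>G\<^esub> g) (act g \<Phi>) = \<Phi>"
  using act_mult[OF assms(1) group.inv_closed[OF group assms(1)] assms(2)] group.r_inv[OF group assms(1)]
    act_one[OF assms(2)] by simp

lemma act_generator_i_adjacent: "i < n \<Longrightarrow> is_flag F lq \<Phi> \<Longrightarrow> i_adjacent F lq rk i \<Phi> (act (s i) \<Phi>)"
  using flag_action unfolding flag_action_def by blast

lemma i_adjacent_eq_act_generator: "i < n \<Longrightarrow> i_adjacent F lq rk i \<Phi> \<Psi> \<Longrightarrow> \<Psi> = act (s i) \<Phi>"
  using i_adjacent_unique act_generator_i_adjacent i_adjacent_flags by blast

lemma act_inv_generator:
  assumes i: "i < n" and fl: "is_flag F lq \<Phi>"
  shows "act (inv\<^bsub>G\<^esub> s i) \<Phi> = act (s i) \<Phi>"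
proof -
  have si: "s i \<in> carrier G" using generators_closed[OF i] .
  have si_inv: "inv\<^bsub>G\<^esub> s i \<in> carrier G" using group.inv_closed[OF group si] .
  have "act (s i) (act (inv\<^bsub>G\<^esub> s i) \<Phi>) = \<Phi>"
    using act_mult[OF si_inv si fl] group.l_inv[OF group si] act_one[OF fl] by simp
  then have "i_adjacent F lq rk i (act (inv\<^bsub>G\<^esub> s i) \<Phi>) \<Phi>"
    using act_generator_i_adjacent[OF i act_flag[OF si_inv fl]] by simp
  then show ?thesis using i_adjacent_eq_act_generator[OF i i_adjacent_sym] by blast
qed

lemma flag_action_transitive:
  assumes "is_flag F lq \<Phi>" "is_flag F lq \<Psi>"
  obtains g where "g \<in> carrier G" "\<Psi> = act g \<Phi>"
proof -
  obtain b where b: "rk b = -1" "\<And>\<Phi>. is_flag F lq \<Phi> \<Longrightarrow> b \<in> \<Phi>"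
    by (rule least_face_in_flags) auto
  have "adj_connected {j. j < n \<and> int j \<noteq> rk b} \<Phi> \<Psi>"
    using flags_through_face_connected[OF assms] b(2) assms by blast
  then have "\<exists>g\<in>carrier G. \<Psi> = act g \<Phi>"
    unfolding adj_connected_def
  proof (induction rule: rtranclp_induct)
    case base
    then show ?case using act_one[OF assms(1)] group.is_monoid[OF group] monoid.one_closed by metis
  next
    case (step \<Theta> \<Theta>')
    then obtain g j where g: "g \<in> carrier G" "\<Theta> = act g \<Phi>" and j: "j < n" "i_adjacent F lq rk j \<Theta> \<Theta>'"
      by blast
    have "\<Theta>' = act (g \<otimes>\<^bsub>G\<^esub> s j) \<Phi>"
      using i_adjacent_eq_act_generator[OF j] act_mult[OF g(1) generators_closed[OF j(1)] assms(1)] g(2)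
      by simp
    then show ?case using group.is_monoid[OF group] monoid.m_closed g(1) generators_closed[OF j(1)] by metis
  qed
  then show ?thesis using that by blast
qed

end

text \<open>The generators act by i-adjacency, which determines the adjacent flag uniquely.\<close>

lemma i_adjacency_preserving_map_commutes_with_action:
  assumes P: "polytope_flag_action F lq rk n G s act" and P': "polytope_flag_action F' lq' rk' n G s act'"
    and maps_flags: "\<And>\<Phi>. is_flag F lq \<Phi> \<Longrightarrow> is_flag F' lq' (f \<Phi>)"
    and maps_adj: "\<And>i \<Phi>. i < n \<Longrightarrow> is_flag F lq \<Phi> \<Longrightarrow> i_adjacent F' lq' rk' i (f \<Phi>) (f (act (s i) \<Phi>))"
    and g: "g \<in> carrier G" and fl: "is_flag F lq \<Phi>"
  shows "f (act g \<Phi>) = act' g (f \<Phi>)"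
proof -
  interpret P: polytope_flag_action F lq rk n G s act by (rule P)
  interpret P': polytope_flag_action F' lq' rk' n G s act' by (rule P')
  have act_s: "f (act (s i) \<Phi>) = act' (s i) (f \<Phi>)" if "i < n" "is_flag F lq \<Phi>" for i \<Phi>
    using P'.i_adjacent_eq_act_generator[OF that(1) maps_adj[OF that]] .
  have "g \<in> generate G (s ` {..<n})" using g P.generated by simp
  then show ?thesis
    using fl
  proof (induction arbitrary: \<Phi> rule: generate.induct)
    case one
    then show ?case using P.act_one P'.act_one maps_flags by simp
  next
    case (incl h)
    then show ?case using act_s by blast
  next
    case (inv h)
    then obtain i where i: "i < n" "h = s i" by blast
    then show ?case
      using act_s[OF i(1) inv.prems] P.act_inv_generator[OF i(1) inv.prems]
        P'.act_inv_generator[OF i(1) maps_flags[OF inv.prems]] by simp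
  next
    case (eng h1 h2)
    have h: "h1 \<in> carrier G" "h2 \<in> carrier G" using eng.hyps P.generated by auto
    have "f (act (h1 \<otimes>\<^bsub>G\<^esub> h2) \<Phi>) = f (act h2 (act h1 \<Phi>))" using P.act_mult[OF h eng.prems] by simp
    also have "\<dots> = act' h2 (act' h1 (f \<Phi>))" using eng.IH P.act_flag[OF h(1) eng.prems] eng.prems by simp
    also have "\<dots> = act' (h1 \<otimes>\<^bsub>G\<^esub> h2) (f \<Phi>)" using P'.act_mult[OF h maps_flags[OF eng.prems]] by simp
    finally show ?case .
  qed
qed


section \<open>Coverings induced by equivariant flag maps\<close>

lemma covering_commutes_with_action:
  assumes P: "polytope_flag_action F lq rk n G s act" and P': "polytope_flag_action F' lq' rk' n G s act'"
    and \<gamma>: "covering F lq rk F' lq' rk' n \<gamma>" and "g \<in> carrier G" "is_flag F lq \<Phi>"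
  shows "\<gamma> ` act g \<Phi> = act' g (\<gamma> ` \<Phi>)"
proof (rule i_adjacency_preserving_map_commutes_with_action[OF P P' _ _ assms(4,5)])
  show "is_flag F' lq' (\<gamma> ` \<Psi>)" if "is_flag F lq \<Psi>" for \<Psi>
    using \<gamma> that unfolding covering_def by blast
  show "i_adjacent F' lq' rk' i (\<gamma> ` \<Psi>) (\<gamma> ` act (s i) \<Psi>)" if "i < n" "is_flag F lq \<Psi>" for i \<Psi>
    using \<gamma> polytope_flag_action.act_generator_i_adjacent[OF P that] that(1) unfolding covering_def by blast
qed

context polytope_flag_action
begin

lemma automorphism_commutes_with_action:
  assumes "polytope_automorphism F lq \<alpha>" "g \<in> carrier G" "is_flag F lq \<Phi>"
  shows "\<alpha> ` act g \<Phi> = act g (\<alpha> ` \<Phi>)"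
proof -
  have P: "polytope_flag_action F lq rk n G s act"
    using polytope_flag_action_axioms abstract_polytope_axioms unfolding polytope_flag_action_def by blast
  show ?thesis
    by (rule i_adjacency_preserving_map_commutes_with_action[OF P P _ _ assms(2,3)])
      (use automorphism_image_flag[OF assms(1)] automorphism_image_i_adjacent[OF assms(1)]
        act_generator_i_adjacent in auto)
qed

text \<open>An automorphism carrying the base flag to the given flag commutes with the action.\<close>

lemma regular_stabilizer_fixes_flags:
  assumes "regular_polytope F lq rk n" "k \<in> carrier G" "is_flag F lq \<Phi>0" "act k \<Phi>0 = \<Phi>0"
    and "is_flag F lq \<Phi>"
  shows "act k \<Phi> = \<Phi>"
proof -
  obtain \<alpha> where \<alpha>: "polytope_automorphism F lq \<alpha>" "\<alpha> ` \<Phi>0 = \<Phi>"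
    using assms(1,3,5) unfolding regular_polytope_def by blast
  have "act k \<Phi> = \<alpha> ` act k \<Phi>0" using automorphism_commutes_with_action[OF \<alpha>(1) assms(2,3)] \<alpha>(2) by simp
  then show ?thesis using assms(4) \<alpha>(2) by simp
qed

lemma trivially_acting_in_core:
  assumes k: "k \<in> carrier G" and trivial: "\<And>\<Phi>. is_flag F lq \<Phi> \<Longrightarrow> act k \<Phi> = \<Phi>"
    and fl: "is_flag F lq \<Phi>0"
  shows "k \<in> core G (flag_stabilizer G act \<Phi>0)"
  unfolding core_def
proof (rule INT_I)
  interpret group G by (rule group)
  fix w assume w: "w \<in> carrier G"
  define x where "x = w \<otimes>\<^bsub>G\<^esub> k \<otimes>\<^bsub>G\<^esub> inv\<^bsub>G\<^esub> w"
  have x: "x \<in> carrier G" using w k unfolding x_def by simp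
  have "act x \<Phi>0 = act (inv\<^bsub>G\<^esub> w) (act k (act w \<Phi>0))"
    unfolding x_def using act_mult w k fl act_flag by simp
  also have "\<dots> = \<Phi>0" using trivial[OF act_flag[OF w fl]] act_inv_cancel[OF w fl] by simp
  finally have "x \<in> flag_stabilizer G act \<Phi>0" using x unfolding flag_stabilizer_def by simp
  moreover have "inv\<^bsub>G\<^esub> w \<otimes>\<^bsub>G\<^esub> x \<otimes>\<^bsub>G\<^esub> w = inv\<^bsub>G\<^esub> w \<otimes>\<^bsub>G\<^esub> (w \<otimes>\<^bsub>G\<^esub> k)"
    unfolding x_def using w k by (simp add: m_assoc)
  then have "k = inv\<^bsub>G\<^esub> w \<otimes>\<^bsub>G\<^esub> x \<otimes>\<^bsub>G\<^esub> w" using w k by (simp add: m_assoc[symmetric])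
  ultimately show "k \<in> {inv\<^bsub>G\<^esub> w \<otimes>\<^bsub>G\<^esub> x \<otimes>\<^bsub>G\<^esub> w | x. x \<in> flag_stabilizer G act \<Phi>0}" by blast
qed

end

lemma covering_transfers_trivial_action:
  assumes R: "polytope_flag_action FR leR rkR n G s actR"
    and Q: "polytope_flag_action FQ leQ rkQ n G s actQ"
    and \<gamma>: "covering FR leR rkR FQ leQ rkQ n \<gamma>" and k: "k \<in> carrier G"
    and trivial: "\<And>\<Psi>. is_flag FR leR \<Psi> \<Longrightarrow> actR k \<Psi> = \<Psi>" and fl: "is_flag FQ leQ \<Phi>"
  shows "actQ k \<Phi> = \<Phi>"
proof -
  interpret R: polytope_flag_action FR leR rkR n G s actR by (rule R)
  interpret Q: polytope_flag_action FQ leQ rkQ n G s actQ by (rule Q)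
  obtain \<Psi>0 where \<Psi>0: "is_flag FR leR \<Psi>0" by (rule R.flag_exists)
  have "is_flag FQ leQ (\<gamma> ` \<Psi>0)" using \<gamma> \<Psi>0 unfolding covering_def by blast
  then obtain u where u: "u \<in> carrier G" "\<Phi> = actQ u (\<gamma> ` \<Psi>0)"
    using Q.flag_action_transitive fl by metis
  have \<Psi>: "is_flag FR leR (actR u \<Psi>0)" using R.act_flag[OF u(1) \<Psi>0] .
  have \<Phi>: "\<Phi> = \<gamma> ` actR u \<Psi>0" using covering_commutes_with_action[OF R Q \<gamma> u(1) \<Psi>0] u(2) by simp
  then have "actQ k \<Phi> = \<gamma> ` actR k (actR u \<Psi>0)" using covering_commutes_with_action[OF R Q \<gamma> k \<Psi>] by simp
  then show ?thesis using trivial[OF \<Psi>] \<Phi> by simp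
qed

lemma regular_cover_stabilizer_subset_core:
  assumes R: "polytope_flag_action FR leR rkR n G s actR"
    and Q: "polytope_flag_action FQ leQ rkQ n G s actQ"
    and regular: "regular_polytope FR leR rkR n" and \<gamma>: "covering FR leR rkR FQ leQ rkQ n \<gamma>"
    and \<Psi>0: "is_flag FR leR \<Psi>0" and \<Phi>0: "is_flag FQ leQ \<Phi>0"
  shows "flag_stabilizer G actR \<Psi>0 \<subseteq> core G (flag_stabilizer G actQ \<Phi>0)"
proof
  fix k assume "k \<in> flag_stabilizer G actR \<Psi>0"
  then have k: "k \<in> carrier G" "actR k \<Psi>0 = \<Psi>0" unfolding flag_stabilizer_def by auto
  have "actR k \<Psi> = \<Psi>" if "is_flag FR leR \<Psi>" for \<Psi>
    using polytope_flag_action.regular_stabilizer_fixes_flags[OF R regular k(1) \<Psi>0 k(2) that] .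
  then have "actQ k \<Phi> = \<Phi>" if "is_flag FQ leQ \<Phi>" for \<Phi>
    using covering_transfers_trivial_action[OF R Q \<gamma> k(1) _ that] by blast
  then show "k \<in> core G (flag_stabilizer G actQ \<Phi>0)"
    using polytope_flag_action.trivially_acting_in_core[OF Q k(1) _ \<Phi>0] by blast
qed

text \<open>The witness is the orbit map sending act g of the first base flag to act g of the
  second, well defined because the stabilizers are nested.\<close>

lemma equivariant_flag_map_exists:
  assumes R: "polytope_flag_action FR leR rkR n G s actR"
    and C: "polytope_flag_action FC leC rkC n G s actC"
    and \<Psi>0: "is_flag FR leR \<Psi>0" and \<Phi>0: "is_flag FC leC \<Phi>0"
    and stab: "flag_stabilizer G actR \<Psi>0 \<subseteq> flag_stabilizer G actC \<Phi>0"
  obtains f where "\<And>\<Psi>. is_flag FR leR \<Psi> \<Longrightarrow> is_flag FC leC (f \<Psi>)"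
    and "\<And>g \<Psi>. g \<in> carrier G \<Longrightarrow> is_flag FR leR \<Psi> \<Longrightarrow> f (actR g \<Psi>) = actC g (f \<Psi>)"
proof -
  interpret R: polytope_flag_action FR leR rkR n G s actR by (rule R)
  interpret C: polytope_flag_action FC leC rkC n G s actC by (rule C)
  interpret group G by (rule R.group)
  define f where "f \<Psi> = actC (SOME g. g \<in> carrier G \<and> \<Psi> = actR g \<Psi>0) \<Phi>0" for \<Psi>
  have orbit: "f (actR g \<Psi>0) = actC g \<Phi>0" if g: "g \<in> carrier G" for g
  proof -
    define h where "h = (SOME h. h \<in> carrier G \<and> actR g \<Psi>0 = actR h \<Psi>0)"
    have h: "h \<in> carrier G" "actR g \<Psi>0 = actR h \<Psi>0"
      using someI[of "\<lambda>h. h \<in> carrier G \<and> actR g \<Psi>0 = actR h \<Psi>0"] g unfolding h_def by blast+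
    define k where "k = h \<otimes>\<^bsub>G\<^esub> inv\<^bsub>G\<^esub> g"
    have k: "k \<in> carrier G" using h g unfolding k_def by simp
    have "actR k \<Psi>0 = actR (inv\<^bsub>G\<^esub> g) (actR g \<Psi>0)"
      unfolding k_def using R.act_mult h g \<Psi>0 by simp
    then have "k \<in> flag_stabilizer G actR \<Psi>0"
      using R.act_inv_cancel[OF g \<Psi>0] k unfolding flag_stabilizer_def by simp
    then have k_fixes: "actC k \<Phi>0 = \<Phi>0" using stab unfolding flag_stabilizer_def by blast
    have "h = k \<otimes>\<^bsub>G\<^esub> g" unfolding k_def using h g by (simp add: m_assoc)
    then have "f (actR g \<Psi>0) = actC g (actC k \<Phi>0)"
      unfolding f_def h_def[symmetric] using C.act_mult k g \<Phi>0 by simp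
    then show ?thesis using k_fixes by simp
  qed
  show ?thesis
  proof
    fix \<Psi> assume "is_flag FR leR \<Psi>"
    then obtain g where "g \<in> carrier G" "\<Psi> = actR g \<Psi>0" using R.flag_action_transitive \<Psi>0 by metis
    then show "is_flag FC leC (f \<Psi>)" using orbit C.act_flag \<Phi>0 by simp
  next
    fix h \<Psi> assume h: "h \<in> carrier G" and "is_flag FR leR \<Psi>"
    then obtain g where g: "g \<in> carrier G" "\<Psi> = actR g \<Psi>0" using R.flag_action_transitive \<Psi>0 by metis
    have "actR h \<Psi> = actR (g \<otimes>\<^bsub>G\<^esub> h) \<Psi>0" using R.act_mult[OF g(1) h \<Psi>0] g(2) by simp
    then have "f (actR h \<Psi>) = actC (g \<otimes>\<^bsub>G\<^esub> h) \<Phi>0" using orbit g(1) h by simp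
    also have "\<dots> = actC h (f \<Psi>)" using orbit C.act_mult g h \<Phi>0 by simp
    finally show "f (actR h \<Psi>) = actC h (f \<Psi>)" .
  qed
qed


locale equivariant_flag_map =
  R: polytope_flag_action FR leR rkR n G s actR + C: polytope_flag_action FC leC rkC n G s actC
  for FR :: "'b set" and leR rkR n G s actR and FC :: "'c set" and leC rkC actC +
  fixes f :: "'b set \<Rightarrow> 'c set"
  assumes maps_flags: "is_flag FR leR \<Psi> \<Longrightarrow> is_flag FC leC (f \<Psi>)"
    and equivariant: "g \<in> carrier G \<Longrightarrow> is_flag FR leR \<Psi> \<Longrightarrow> f (actR g \<Psi>) = actC g (f \<Psi>)"
begin

lemma maps_i_adjacent:
  assumes "i < n" "i_adjacent FR leR rkR i \<Phi> \<Psi>"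
  shows "i_adjacent FC leC rkC i (f \<Phi>) (f \<Psi>)"
proof -
  have fl: "is_flag FR leR \<Phi>" using R.i_adjacent_flags[OF assms(2)] by blast
  have "f \<Psi> = actC (s i) (f \<Phi>)"
    using R.i_adjacent_eq_act_generator[OF assms] equivariant[OF R.generators_closed[OF assms(1)] fl] by simp
  then show ?thesis using C.act_generator_i_adjacent[OF assms(1) maps_flags[OF fl]] by simp
qed

lemma maps_adj_connected:
  assumes "R.adj_connected J \<Phi> \<Psi>" "J \<subseteq> {..<n}"
  shows "C.adj_connected J (f \<Phi>) (f \<Psi>)"
  using assms(1) unfolding R.adj_connected_def C.adj_connected_def
proof (induction rule: rtranclp_induct)
  case (step \<Theta> \<Theta>')
  then obtain j where j: "j \<in> J" "i_adjacent FR leR rkR j \<Theta> \<Theta>'" by blast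
  then have "i_adjacent FC leC rkC j (f \<Theta>) (f \<Theta>')" using maps_i_adjacent assms(2) by blast
  then show ?case using step.IH j(1) by (blast intro: rtranclp.rtrancl_into_rtrancl)
qed simp

definition face_map :: "'b \<Rightarrow> 'c" where
  "face_map x = C.flag_face (f (SOME \<Psi>. is_flag FR leR \<Psi> \<and> x \<in> \<Psi>)) (rkR x)"

text \<open>The face map does not depend on the flag chosen in its definition: flags through x are
  joined by adjacencies of ranks other than rk x, and f turns these into adjacencies of C, which
  keep the face of rank rk x.\<close>

lemma face_map_eq:
  assumes fl: "is_flag FR leR \<Psi>" and x: "x \<in> \<Psi>"
  shows "face_map x = C.flag_face (f \<Psi>) (rkR x)"
proof -
  define \<Psi>' where "\<Psi>' = (SOME \<Psi>. is_flag FR leR \<Psi> \<and> x \<in> \<Psi>)"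
  have \<Psi>': "is_flag FR leR \<Psi>'" "x \<in> \<Psi>'"
    using someI[of "\<lambda>\<Psi>. is_flag FR leR \<Psi> \<and> x \<in> \<Psi>"] fl x unfolding \<Psi>'_def by blast+
  have r: "-1 \<le> rkR x" "rkR x \<le> int n" using R.rank_range R.flag_subset fl x by blast+
  have "C.adj_connected {j. j < n \<and> int j \<noteq> rkR x} (f \<Psi>') (f \<Psi>)"
    by (rule maps_adj_connected[OF R.flags_through_face_connected[OF \<Psi>'(1) fl \<Psi>'(2) x]]) auto
  then have "C.flag_face (f \<Psi>) (rkR x) = C.flag_face (f \<Psi>') (rkR x)"
    using C.adj_connected_flag_face r by blast
  then show ?thesis unfolding face_map_def \<Psi>'_def by simp
qed

lemma face_map_image_flag:
  assumes fl: "is_flag FR leR \<Psi>"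
  shows "face_map ` \<Psi> = f \<Psi>"
proof
  show "face_map ` \<Psi> \<subseteq> f \<Psi>"
    using face_map_eq[OF fl] C.flag_face(1)[OF maps_flags[OF fl]] R.rank_range R.flag_subset[OF fl] by auto
  show "f \<Psi> \<subseteq> face_map ` \<Psi>"
  proof
    fix z assume z: "z \<in> f \<Psi>"
    have r: "-1 \<le> rkC z" "rkC z \<le> int n"
      using C.rank_range C.flag_subset[OF maps_flags[OF fl]] z by blast+
    have x: "R.flag_face \<Psi> (rkC z) \<in> \<Psi>" "rkR (R.flag_face \<Psi> (rkC z)) = rkC z"
      using R.flag_face[OF fl r] by auto
    then show "z \<in> face_map ` \<Psi>"
      using face_map_eq[OF fl x(1)] C.flag_face_rank[OF maps_flags[OF fl] z] by force
  qed
qed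

lemma face_map_rank:
  assumes x: "x \<in> FR"
  shows "rkC (face_map x) = rkR x"
proof -
  obtain \<Psi> where \<Psi>: "is_flag FR leR \<Psi>" "x \<in> \<Psi>" using R.face_in_flag[OF x] .
  have "-1 \<le> rkR x" "rkR x \<le> int n" using R.rank_range[OF x] by auto
  then show ?thesis using face_map_eq[OF \<Psi>] C.flag_face(2)[OF maps_flags[OF \<Psi>(1)]] by simp
qed

lemma covering: "covering FR leR rkR FC leC rkC n face_map"
  unfolding covering_def
proof (intro conjI allI impI ballI)
  show "face_map ` FR = FC"
  proof
    show "face_map ` FR \<subseteq> FC"
    proof
      fix z assume "z \<in> face_map ` FR"
      then obtain x where x: "x \<in> FR" "z = face_map x" by blast
      obtain \<Psi> where \<Psi>: "is_flag FR leR \<Psi>" "x \<in> \<Psi>" using R.face_in_flag[OF x(1)] .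
      have "z \<in> f \<Psi>" using face_map_image_flag[OF \<Psi>(1)] \<Psi>(2) x(2) by blast
      then show "z \<in> FC" using C.flag_subset[OF maps_flags[OF \<Psi>(1)]] by blast
    qed
    show "FC \<subseteq> face_map ` FR"
    proof
      fix z assume "z \<in> FC"
      then obtain \<Phi> where \<Phi>: "is_flag FC leC \<Phi>" "z \<in> \<Phi>" by (rule C.face_in_flag)
      obtain \<Psi>0 where \<Psi>0: "is_flag FR leR \<Psi>0" by (rule R.flag_exists)
      obtain g where g: "g \<in> carrier G" "\<Phi> = actC g (f \<Psi>0)"
        using C.flag_action_transitive maps_flags[OF \<Psi>0] \<Phi>(1) by metis
      have "\<Phi> = face_map ` actR g \<Psi>0"
        using face_map_image_flag[OF R.act_flag[OF g(1) \<Psi>0]] equivariant[OF g(1) \<Psi>0] g(2) by simp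
      then show "z \<in> face_map ` FR" using \<Phi>(2) R.flag_subset[OF R.act_flag[OF g(1) \<Psi>0]] by blast
    qed
  qed
  show "rkC (face_map x) = rkR x" if "x \<in> FR" for x
    using face_map_rank[OF that] .
  fix x y assume x: "x \<in> FR" and y: "y \<in> FR" and xy: "leR x y"
  obtain \<Psi> where \<Psi>: "is_flag FR leR \<Psi>" "x \<in> \<Psi>" "y \<in> \<Psi>" using R.incident_faces_in_flag[OF x y xy] .
  have "face_map x \<in> f \<Psi>" "face_map y \<in> f \<Psi>" using face_map_image_flag[OF \<Psi>(1)] \<Psi>(2,3) by blast+
  then show "leC (face_map x) (face_map y)"
    using C.flag_le_of_rank_le[OF maps_flags[OF \<Psi>(1)]] face_map_rank[OF x] face_map_rank[OF y]
      R.rank_le[OF x y xy] by simp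
next
  show "is_flag FC leC (face_map ` \<Phi>)" if "is_flag FR leR \<Phi>" for \<Phi>
    using face_map_image_flag maps_flags that by simp
  show "i_adjacent FC leC rkC i (face_map ` \<Phi>) (face_map ` \<Psi>)"
    if "i < n" "i_adjacent FR leR rkR i \<Phi> \<Psi>" for i \<Phi> \<Psi>
    using maps_i_adjacent[OF that] face_map_image_flag R.i_adjacent_flags[OF that(2)] by simp
qed

end

theorem theorem3:
  fixes G :: "('g, 'm) monoid_scheme" and s :: "nat \<Rightarrow> 'g" and n :: nat
    and FQ :: "'a set" and leQ :: "'a \<Rightarrow> 'a \<Rightarrow> bool" and rkQ :: "'a \<Rightarrow> int"
    and actQ :: "'g \<Rightarrow> 'a set \<Rightarrow> 'a set" and \<Phi>Q :: "'a set" and N :: "'g set"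
    and FR :: "'b set" and leR :: "'b \<Rightarrow> 'b \<Rightarrow> bool" and rkR :: "'b \<Rightarrow> int"
    and actR :: "'g \<Rightarrow> 'b set \<Rightarrow> 'b set"
    and FC :: "'c set" and leC :: "'c \<Rightarrow> 'c \<Rightarrow> bool" and rkC :: "'c \<Rightarrow> int"
    and actC :: "'g \<Rightarrow> 'c set \<Rightarrow> 'c set" and \<Phi>C :: "'c set"
  assumes W: "string_C_group G s n"
    and Q: "polytope FQ leQ rkQ n"
    and Q_act: "flag_action G s n FQ leQ rkQ actQ"
    and Q_base: "is_flag FQ leQ \<Phi>Q"
    and N_def: "N = flag_stabilizer G actQ \<Phi>Q"
    and C: "regular_polytope FC leC rkC n"
    and C_act: "flag_action G s n FC leC rkC actC"
    and C_base: "is_flag FC leC \<Phi>C"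
    and C_stab: "flag_stabilizer G actC \<Phi>C = core G N"
    and R: "regular_polytope FR leR rkR n"
    and R_act: "flag_action G s n FR leR rkR actR"
    and R_cov: "covers FR leR rkR FQ leQ rkQ n"
  shows "covers FR leR rkR FC leC rkC n"
proof -
  have R': "polytope_flag_action FR leR rkR n G s actR"
    using R W R_act by (auto simp: regular_polytope_def intro: polytope_flag_actionI)
  have Q': "polytope_flag_action FQ leQ rkQ n G s actQ"
    using Q W Q_act by (rule polytope_flag_actionI)
  have C': "polytope_flag_action FC leC rkC n G s actC"
    using C W C_act by (auto simp: regular_polytope_def intro: polytope_flag_actionI)
  obtain \<gamma> where \<gamma>: "covering FR leR rkR FQ leQ rkQ n \<gamma>" using R_cov unfolding covers_def by blast
  obtain \<Psi>0 where \<Psi>0: "is_flag FR leR \<Psi>0"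
    using R' abstract_polytope.flag_exists polytope_flag_action_def by metis
  have "flag_stabilizer G actR \<Psi>0 \<subseteq> flag_stabilizer G actC \<Phi>C"
    using regular_cover_stabilizer_subset_core[OF R' Q' R \<gamma> \<Psi>0 Q_base] C_stab N_def by simp
  then obtain f where "\<And>\<Psi>. is_flag FR leR \<Psi> \<Longrightarrow> is_flag FC leC (f \<Psi>)"
    and "\<And>g \<Psi>. g \<in> carrier G \<Longrightarrow> is_flag FR leR \<Psi> \<Longrightarrow> f (actR g \<Psi>) = actC g (f \<Psi>)"
    using equivariant_flag_map_exists[OF R' C' \<Psi>0 C_base] by blast
  then interpret equivariant_flag_map FR leR rkR n G s actR FC leC rkC actC f
    using R' C' by (simp add: equivariant_flag_map_def equivariant_flag_map_axioms_def)
  show ?thesis unfolding covers_def using covering by blast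
qed

end
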